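(* Let $\mu$ be a Borel probability measure on the metric space $(X,d)$ and $k\geq2$ an integer. Then \[(k-1)\underline{D}_k(\mu)=\liminf_{r\to0}\frac{\log\int_{X^k}\prod_{j=1}^{k-1}\prod_{l=j+1}^k\mathbbm{1}_{B(x_j,r)}(x_l)\,d\mu^k(x_1,\dots,x_k)}{\log r}\] and \[(k-1)\overline{D}_k(\mu)=\limsup_{r\to0}\frac{\log\int_{X^k}\prod_{j=1}^{k-1}\prod_{l=j+1}^k\mathbbm{1}_{B(x_j,r)}(x_l)\,d\mu^k(x_1,\dots,x_k)}{\log r}.\]
   Context: $(X,d)$ is a finite dimensional metric space (standing assumption of the paper); $B(x,r)$ is the open ball, $\mu^k$ the product measure. $\underline{D}_k(\mu)=\liminf_{r\to0}\frac{\log\int_X\mu(B(x,r))^{k-1}d\mu(x)}{(k-1)\log r}$ and $\overline{D}_k(\mu)$ is the same with $\limsup$. *)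

theory Defs
  imports "HOL-Probability.Probability"
begin

text \<open>Finite dimensional metric space: finite Assouad dimension, equivalently
  the doubling property (every ball of radius 2r is covered by at most N balls of radius r).\<close>
definition doubling_metric :: "'a::metric_space itself \<Rightarrow> bool" where
  "doubling_metric _ \<longleftrightarrow> (\<exists>N::nat. \<forall>(x::'a) r. r > 0 \<longrightarrow>
     (\<exists>C. finite C \<and> card C \<le> N \<and> ball x (2 * r) \<subseteq> (\<Union>c\<in>C. ball c r)))"

definition corr_integral :: "'a::metric_space measure \<Rightarrow> nat \<Rightarrow> real \<Rightarrow> real" where
  "corr_integral M k r = (\<integral>x. (measure M (ball x r)) ^ (k - 1) \<partial>M)"

definition lower_Dk :: "'a::metric_space measure \<Rightarrow> nat \<Rightarrow> ereal" where
  "lower_Dk M k = Liminf (at_right 0)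
     (\<lambda>r. ereal (ln (corr_integral M k r) / ((real k - 1) * ln r)))"

definition upper_Dk :: "'a::metric_space measure \<Rightarrow> nat \<Rightarrow> ereal" where
  "upper_Dk M k = Limsup (at_right 0)
     (\<lambda>r. ereal (ln (corr_integral M k r) / ((real k - 1) * ln r)))"

definition pair_corr_integral :: "'a::metric_space measure \<Rightarrow> nat \<Rightarrow> real \<Rightarrow> real" where
  "pair_corr_integral M k r =
     (\<integral>x. (\<Prod>j<k. \<Prod>l\<in>{j<..<k}. indicator (ball (x j) r) (x l)) \<partial>(PiM {..<k} (\<lambda>_. M)))"

end

theory Submission
  imports Defs "HOL-Real_Asymp.Real_Asymp"
begin

text \<open>Both correlation integrals are \<open>\<mu>\<^sup>k\<close>-measures of sets of \<open>k\<close>-tuples: the usual one of the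
  tuples whose points lie within \<open>r\<close> of the first point, the pairwise one of the tuples whose
  points are pairwise within \<open>r\<close>.  By the triangle inequality the second set lies between the
  first one at radii \<open>r/2\<close> and \<open>r\<close>, and since \<open>ln (r/2) / ln r \<rightarrow> 1\<close> the halving of the radius
  does not change the lower and upper limits of the log-ratios.  The doubling hypothesis only
  serves to make the space separable, so that the distance is measurable with respect to the
  product of the Borel \<open>\<sigma>\<close>-algebras.\<close>

lemma doubling_metric_cover_ball:
  assumes dbl: "doubling_metric TYPE('a::metric_space)" and "r > 0"
  shows "\<exists>C. finite C \<and> ball (x::'a) (2 ^ m * r) \<subseteq> (\<Union>c\<in>C. ball c r)"
  using \<open>r > 0\<close>
proof (induction m arbitrary: x r)
  case 0
  then show ?case by (intro exI[of _ "{x}"]) auto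
next
  case (Suc m)
  obtain C where C: "finite C" "ball x (2 ^ m * (2 * r)) \<subseteq> (\<Union>c\<in>C. ball c (2 * r))"
    using Suc.IH[of "2 * r" x] Suc.prems by auto
  have "\<forall>c::'a. \<exists>E. finite E \<and> ball c (2 * r) \<subseteq> (\<Union>d\<in>E. ball d r)"
    using dbl Suc.prems unfolding doubling_metric_def by blast
  then obtain E :: "'a \<Rightarrow> 'a set" where E: "\<And>c. finite (E c) \<and> ball c (2 * r) \<subseteq> (\<Union>d\<in>E c. ball d r)"
    by metis
  have "ball x (2 ^ Suc m * r) = ball x (2 ^ m * (2 * r))"
    by (simp add: mult_ac)
  also have "\<dots> \<subseteq> (\<Union>c\<in>C. ball c (2 * r))"
    by (rule C(2))
  also have "\<dots> \<subseteq> (\<Union>d\<in>(\<Union>c\<in>C. E c). ball d r)"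
    using E by blast
  finally have "ball x (2 ^ Suc m * r) \<subseteq> (\<Union>d\<in>(\<Union>c\<in>C. E c). ball d r)" .
  moreover have "finite (\<Union>c\<in>C. E c)"
    using C(1) E by blast
  ultimately show ?case by blast
qed

lemma doubling_metric_imp_separable:
  assumes dbl: "doubling_metric TYPE('a::metric_space)"
  shows "separable_space (euclidean :: 'a topology)"
proof -
  fix x0 :: 'a
  have "\<forall>n m. \<exists>C. finite C \<and> ball x0 (2 ^ n * (1/2) ^ m) \<subseteq> (\<Union>c\<in>C. ball c ((1/2) ^ m))"
    by (intro allI doubling_metric_cover_ball[OF dbl]) simp
  then obtain C where C: "\<And>n m. finite (C n m)"
    "\<And>n m. ball x0 (2 ^ n * (1/2) ^ m) \<subseteq> (\<Union>c\<in>C n m. ball c ((1/2) ^ m))"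
    by metis
  have "x \<in> closure (\<Union>n m. C n m)" for x
  proof (unfold closure_approachable, intro allI impI)
    fix e :: real assume "e > 0"
    obtain m where m: "(1/2 :: real) ^ m < e"
      using real_arch_pow_inv[OF \<open>e > 0\<close>, of "1/2"] by auto
    obtain n where "dist x0 x * 2 ^ m < 2 ^ n"
      using real_arch_pow[of 2 "dist x0 x * 2 ^ m"] by auto
    then have "x \<in> ball x0 (2 ^ n * (1/2) ^ m)"
      by (simp add: field_simps)
    then obtain c where "c \<in> C n m" "dist c x < (1/2) ^ m"
      using C(2)[of n m] by force
    then show "\<exists>c\<in>\<Union>n m. C n m. dist c x < e"
      using m by force
  qed
  moreover have "countable (\<Union>n m. C n m)"
    using C(1) by (simp add: countable_finite)
  ultimately show ?thesis
    unfolding separable_space_def by auto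
qed

lemma sets_dist_less:
  fixes f g :: "'b \<Rightarrow> 'a::metric_space"
  assumes "separable_space (euclidean :: 'a topology)" and "sets M = sets borel"
    and f: "f \<in> measurable N M" and g: "g \<in> measurable N M"
  shows "{w \<in> space N. dist (f w) (g w) < r} \<in> sets N"
proof -
  obtain D :: "'a set" where "countable D" and D: "closure D = UNIV"
    using assms(1) unfolding separable_space_def by auto
  have eq: "{w \<in> space N. dist (f w) (g w) < r} =
      (\<Union>c\<in>D. \<Union>q\<in>\<rat>. (f -` ball c q \<inter> space N) \<inter> (g -` ball c (r - q) \<inter> space N))"
  proof (intro equalityI subsetI)
    fix w assume w: "w \<in> {w \<in> space N. dist (f w) (g w) < r}"
    define \<eta> where "\<eta> = r - dist (f w) (g w)"
    have "\<eta> > 0" using w by (simp add: \<eta>_def)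
    moreover have "f w \<in> closure D"
      using D by simp
    ultimately obtain c where c: "c \<in> D" "dist c (f w) < \<eta> / 3"
      unfolding closure_approachable by (meson zero_less_divide_iff zero_less_numeral)
    obtain q where q: "q \<in> \<rat>" "dist c (f w) < q" "q < \<eta> / 3"
      using Rats_dense_in_real c(2) by blast
    have "dist c (g w) < r - q"
      using dist_triangle[of c "g w" "f w"] q \<eta>_def \<open>\<eta> > 0\<close> by linarith
    with w q c show "w \<in> (\<Union>c\<in>D. \<Union>q\<in>\<rat>. (f -` ball c q \<inter> space N) \<inter> (g -` ball c (r - q) \<inter> space N))"
      by auto
  next
    fix w assume "w \<in> (\<Union>c\<in>D. \<Union>q\<in>\<rat>. (f -` ball c q \<inter> space N) \<inter> (g -` ball c (r - q) \<inter> space N))"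
    then obtain c q where "w \<in> space N" "dist c (f w) < q" "dist c (g w) < r - q"
      by auto
    then show "w \<in> {w \<in> space N. dist (f w) (g w) < r}"
      using dist_triangle3[of "f w" "g w" c] by auto
  qed
  have balls: "ball c s \<in> sets M" for c s
    using assms(2) by simp
  show ?thesis
    unfolding eq
    by (intro sets.countable_UN'' \<open>countable D\<close> countable_rat sets.Int
        measurable_sets[OF f balls] measurable_sets[OF g balls])
qed

definition near_first :: "nat \<Rightarrow> real \<Rightarrow> (nat \<Rightarrow> 'a::metric_space) set" where
  "near_first k r = {z. \<forall>l\<in>{0<..<k}. dist (z 0) (z l) < r}"

definition pairwise_near :: "nat \<Rightarrow> real \<Rightarrow> (nat \<Rightarrow> 'a::metric_space) set" where
  "pairwise_near k r = {z. \<forall>j<k. \<forall>l\<in>{j<..<k}. dist (z j) (z l) < r}"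

lemma near_first_mono: "r \<le> s \<Longrightarrow> near_first k r \<subseteq> near_first k s"
  by (auto simp: near_first_def)

lemma pairwise_near_subset_near_first: "pairwise_near k r \<subseteq> near_first k r"
  by (auto simp: pairwise_near_def near_first_def)

lemma near_first_half_subset_pairwise_near: "near_first k (r / 2) \<subseteq> pairwise_near k r"
proof
  fix z assume z: "z \<in> near_first k (r / 2)"
  have "dist (z j) (z l) < r" if "j < k" "l \<in> {j<..<k}" for j l
  proof (cases "j = 0")
    case True
    then have "dist (z 0) (z l) < r / 2"
      using z that by (auto simp: near_first_def)
    then show ?thesis
      using zero_le_dist[of "z 0" "z l"] unfolding True by linarith
  next
    case False
    then have "dist (z 0) (z j) < r / 2" "dist (z 0) (z l) < r / 2"
      using z that by (auto simp: near_first_def)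
    then show ?thesis
      using dist_triangle3[of "z j" "z l" "z 0"] by linarith
  qed
  then show "z \<in> pairwise_near k r"
    by (simp add: pairwise_near_def)
qed

lemma fun_upd_0_mem_near_first:
  "x(0 := y) \<in> near_first k r \<longleftrightarrow> (\<forall>l\<in>{0<..<k}. x l \<in> ball y r)"
  by (auto simp: near_first_def)

lemma indicator_INT_eq_prod:
  "finite A \<Longrightarrow> indicator (\<Inter>i\<in>A. S i) x = (\<Prod>i\<in>A. indicator (S i) x :: 'b::comm_semiring_1)"
  by (induction A rule: finite_induct) (auto simp: indicator_inter_arith)

lemma pair_corr_integral_eq_measure:
  "pair_corr_integral M k r =
     measure (PiM {..<k} (\<lambda>_. M)) (pairwise_near k r \<inter> space (PiM {..<k} (\<lambda>_. M)))"
proof -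
  have INT: "pairwise_near k r = (\<Inter>j<k. \<Inter>l\<in>{j<..<k}. {z. dist (z j) (z l) < r})"
    by (auto simp: pairwise_near_def)
  have "(\<Prod>j<k. \<Prod>l\<in>{j<..<k}. indicator (ball (z j) r) (z l)) =
      (indicator (pairwise_near k r) z :: real)" for z :: "nat \<Rightarrow> 'a"
    unfolding INT by (simp add: indicator_INT_eq_prod indicator_def)
  then show ?thesis
    unfolding pair_corr_integral_def by simp
qed

context
  fixes M :: "'a::metric_space measure"
  assumes prob: "prob_space M" and borel: "sets M = sets borel"
    and separable: "separable_space (euclidean :: 'a topology)"
begin

interpretation prob_space M
  by (rule prob)

lemma space_eq_UNIV: "space M = UNIV"
  using sets_eq_imp_space_eq[OF borel] by simp

lemma sets_PiM_dist_less:
  "j \<in> J \<Longrightarrow> l \<in> J \<Longrightarrow>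
     {z \<in> space (PiM J (\<lambda>_. M)). dist (z j) (z l) < r} \<in> sets (PiM J (\<lambda>_. M))"
  by (intro sets_dist_less[OF separable borel] measurable_component_singleton)

lemma sets_near_first:
  "near_first k r \<inter> space (PiM {..<k} (\<lambda>_. M)) \<in> sets (PiM {..<k} (\<lambda>_. M))"
proof -
  have "near_first k r \<inter> space (PiM {..<k} (\<lambda>_. M)) =
      {z \<in> space (PiM {..<k} (\<lambda>_. M)). \<forall>l\<in>{0<..<k}. dist (z 0) (z l) < r}"
    by (auto simp: near_first_def)
  also have "\<dots> \<in> sets (PiM {..<k} (\<lambda>_. M))"
    by (intro sets.sets_Collect_finite_All sets_PiM_dist_less) auto
  finally show ?thesis .
qed

lemma sets_pairwise_near:
  "pairwise_near k r \<inter> space (PiM {..<k} (\<lambda>_. M)) \<in> sets (PiM {..<k} (\<lambda>_. M))"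
proof -
  have "pairwise_near k r \<inter> space (PiM {..<k} (\<lambda>_. M)) =
      {z \<in> space (PiM {..<k} (\<lambda>_. M)). \<forall>j\<in>{..<k}. \<forall>l\<in>{j<..<k}. dist (z j) (z l) < r}"
    by (auto simp: pairwise_near_def)
  also have "\<dots> \<in> sets (PiM {..<k} (\<lambda>_. M))"
    by (intro sets.sets_Collect_finite_All sets_PiM_dist_less) auto
  finally show ?thesis .
qed

lemma borel_measurable_measure_ball: "(\<lambda>y. measure M (ball y r)) \<in> borel_measurable M"
proof -
  have "{w \<in> space (M \<Otimes>\<^sub>M M). dist (fst w) (snd w) < r} \<in> sets (M \<Otimes>\<^sub>M M)"
    by (intro sets_dist_less[OF separable borel] measurable_fst measurable_snd)
  from measurable_emeasure_Pair[OF this]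
  have "(\<lambda>y. emeasure M (ball y r)) \<in> borel_measurable M"
    by (simp add: space_pair_measure space_eq_UNIV vimage_def ball_def)
  then show ?thesis
    unfolding measure_def by (rule borel_measurable_enn2real)
qed

lemma emeasure_near_first:
  assumes "k > 0"
  shows "emeasure (PiM {..<k} (\<lambda>_. M)) (near_first k r \<inter> space (PiM {..<k} (\<lambda>_. M))) =
    (\<integral>\<^sup>+y. emeasure M (ball y r) ^ (k - 1) \<partial>M)"
proof -
  interpret P: product_sigma_finite "\<lambda>_::nat. M"
    by (simp add: product_sigma_finite_def sigma_finite_measure_axioms)
  define I where "I = {0<..<k}"
  have I: "{..<k} = insert 0 I" "0 \<notin> I" "finite I" "card I = k - 1"
    using assms by (auto simp: I_def)
  define S where "S = near_first k r \<inter> space (PiM {..<k} (\<lambda>_. M))"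
  have [measurable]: "S \<in> sets (PiM (insert 0 I) (\<lambda>_. M))"
    unfolding S_def I(1)[symmetric] by (rule sets_near_first)
  have [measurable]: "ball y r \<in> sets M" for y
    using borel by simp
  have slice: "indicator S (x(0 := y)) = indicator (PiE I (\<lambda>_. ball y r)) x"
    if x: "x \<in> space (PiM I (\<lambda>_. M))" for x y
  proof -
    have "x(0 := y) \<in> space (PiM (insert 0 I) (\<lambda>_. M))"
      using x by (simp add: space_PiM space_eq_UNIV PiE_fun_upd)
    then have "x(0 := y) \<in> S \<longleftrightarrow> x \<in> PiE I (\<lambda>_. ball y r)"
      using x by (simp add: S_def I(1) fun_upd_0_mem_near_first space_PiM PiE_iff flip: I_def)
    then show ?thesis
      unfolding indicator_def by simp
  qed
  have "emeasure (PiM (insert 0 I) (\<lambda>_. M)) S = \<integral>\<^sup>+z. indicator S z \<partial>PiM (insert 0 I) (\<lambda>_. M)"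
    by simp
  also have "\<dots> = \<integral>\<^sup>+y. (\<integral>\<^sup>+x. indicator S (x(0 := y)) \<partial>PiM I (\<lambda>_. M)) \<partial>M"
    by (rule P.product_nn_integral_insert_rev[OF I(3) I(2)]) measurable
  also have "\<dots> = \<integral>\<^sup>+y. emeasure (PiM I (\<lambda>_. M)) (PiE I (\<lambda>_. ball y r)) \<partial>M"
    by (intro nn_integral_cong) (simp add: slice sets_PiM_I_finite I(3) cong: nn_integral_cong)
  also have "\<dots> = \<integral>\<^sup>+y. emeasure M (ball y r) ^ (k - 1) \<partial>M"
    by (simp add: P.emeasure_PiM I(3,4))
  finally show ?thesis
    unfolding S_def I(1) .
qed

lemma corr_integral_eq_measure:
  assumes "k > 0"
  shows "corr_integral M k r =
    measure (PiM {..<k} (\<lambda>_. M)) (near_first k r \<inter> space (PiM {..<k} (\<lambda>_. M)))"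
proof -
  have "(\<lambda>y. measure M (ball y r) ^ (k - 1)) \<in> borel_measurable M"
    by (intro borel_measurable_power borel_measurable_measure_ball)
  then have "integrable M (\<lambda>y. measure M (ball y r) ^ (k - 1))"
    by (intro integrable_const_bound[where B = 1] AE_I2) (simp_all add: power_le_one)
  then have "ennreal (corr_integral M k r) = \<integral>\<^sup>+y. ennreal (measure M (ball y r) ^ (k - 1)) \<partial>M"
    unfolding corr_integral_def by (intro nn_integral_eq_integral[symmetric] AE_I2) simp_all
  also have "\<dots> = emeasure (PiM {..<k} (\<lambda>_. M)) (near_first k r \<inter> space (PiM {..<k} (\<lambda>_. M)))"
    by (simp add: emeasure_near_first[OF assms] emeasure_eq_measure ennreal_power)
  finally show ?thesis
    by (intro measure_eq_emeasure_eq_ennreal[symmetric]) (simp_all add: corr_integral_def)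
qed

lemma measure_PiM_mono:
  assumes "A \<subseteq> B" and "B \<inter> space (PiM I (\<lambda>_. M)) \<in> sets (PiM I (\<lambda>_. M))"
  shows "measure (PiM I (\<lambda>_. M)) (A \<inter> space (PiM I (\<lambda>_. M))) \<le>
    measure (PiM I (\<lambda>_. M)) (B \<inter> space (PiM I (\<lambda>_. M)))"
proof -
  interpret P: prob_space "PiM I (\<lambda>_. M)"
    by (intro prob_space_PiM prob)
  show ?thesis
    using assms by (intro P.finite_measure_mono) auto
qed

lemma pair_corr_integral_le_corr_integral:
  "k > 0 \<Longrightarrow> pair_corr_integral M k r \<le> corr_integral M k r"
  unfolding pair_corr_integral_eq_measure corr_integral_eq_measure
  by (intro measure_PiM_mono pairwise_near_subset_near_first sets_near_first)

lemma corr_integral_half_le_pair_corr_integral: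
  "k > 0 \<Longrightarrow> corr_integral M k (r / 2) \<le> pair_corr_integral M k r"
  unfolding pair_corr_integral_eq_measure corr_integral_eq_measure
  by (intro measure_PiM_mono near_first_half_subset_pairwise_near sets_pairwise_near)

lemma corr_integral_mono:
  "k > 0 \<Longrightarrow> r \<le> s \<Longrightarrow> corr_integral M k r \<le> corr_integral M k s"
  unfolding corr_integral_eq_measure
  by (intro measure_PiM_mono near_first_mono sets_near_first)

lemma corr_integral_le_1: "k > 0 \<Longrightarrow> corr_integral M k r \<le> 1"
  unfolding corr_integral_eq_measure
  by (intro prob_space.prob_le_1 prob_space_PiM prob)

end

lemma ereal_le_epsilon_mult:
  fixes x y :: ereal
  assumes "0 \<le> y" and le: "\<And>e. e > 0 \<Longrightarrow> x \<le> ereal (1 + e) * y"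
  shows "x \<le> y"
proof (cases y)
  case (real l)
  show ?thesis
  proof (rule ereal_le_epsilon2)
    fix e :: real assume "e > 0"
    have "l \<ge> 0"
      using assms(1) real by simp
    then have "x \<le> ereal (1 + e / (l + 1)) * y"
      using le \<open>e > 0\<close> by simp
    also have "\<dots> \<le> y + ereal e"
      using \<open>l \<ge> 0\<close> \<open>e > 0\<close> real by (simp add: field_simps)
    finally show "x \<le> y + ereal e" .
  qed
qed (use assms(1) in auto)

lemma Liminf_at_right_0_rescale:
  fixes f :: "real \<Rightarrow> 'a::complete_linorder"
  assumes "c > 0"
  shows "Liminf (at_right 0) (\<lambda>r. f (c * r)) = Liminf (at_right 0) f"
  using Liminf_filtermap_eq[of "(*) c" "at_right 0" f] assms
  by (simp add: filtermap_times_pos_at_right)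

lemma Limsup_at_right_0_rescale:
  fixes f :: "real \<Rightarrow> 'a::complete_linorder"
  assumes "c > 0"
  shows "Limsup (at_right 0) (\<lambda>r. f (c * r)) = Limsup (at_right 0) f"
  using Limsup_filtermap_eq[of "(*) c" "at_right 0" f] assms
  by (simp add: filtermap_times_pos_at_right)

lemma Liminf_at_right_0_squeeze:
  fixes a b :: "real \<Rightarrow> real"
  assumes nonneg: "\<forall>\<^sub>F r in at_right 0. 0 \<le> a r"
    and lower: "\<forall>\<^sub>F r in at_right 0. a r \<le> b r"
    and upper: "\<And>e. e > 0 \<Longrightarrow> \<forall>\<^sub>F r in at_right 0. b r \<le> (1 + e) * a (r / 2)"
  shows "Liminf (at_right 0) (\<lambda>r. ereal (b r)) = Liminf (at_right 0) (\<lambda>r. ereal (a r))"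
proof (rule antisym)
  let ?F = "at_right (0::real)"
  have "0 \<le> Liminf ?F (\<lambda>r. ereal (a r))"
    by (rule Liminf_bounded) (use nonneg in \<open>auto elim: eventually_mono\<close>)
  then show "Liminf ?F (\<lambda>r. ereal (b r)) \<le> Liminf ?F (\<lambda>r. ereal (a r))"
  proof (rule ereal_le_epsilon_mult)
    fix e :: real assume "e > 0"
    have "Liminf ?F (\<lambda>r. ereal (b r)) \<le> Liminf ?F (\<lambda>r. ereal (1 + e) * ereal (a (r / 2)))"
      by (rule Liminf_mono) (use upper[OF \<open>e > 0\<close>] in \<open>auto elim: eventually_mono\<close>)
    also have "\<dots> = ereal (1 + e) * Liminf ?F (\<lambda>r. ereal (a (r / 2)))"
      using \<open>e > 0\<close> by (intro Liminf_ereal_mult_left) auto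
    also have "Liminf ?F (\<lambda>r. ereal (a (r / 2))) = Liminf ?F (\<lambda>r. ereal (a r))"
      using Liminf_at_right_0_rescale[of "1/2" "\<lambda>r. ereal (a r)"] by simp
    finally show "Liminf ?F (\<lambda>r. ereal (b r)) \<le> ereal (1 + e) * Liminf ?F (\<lambda>r. ereal (a r))" .
  qed
  show "Liminf ?F (\<lambda>r. ereal (a r)) \<le> Liminf ?F (\<lambda>r. ereal (b r))"
    by (rule Liminf_mono) (use lower in \<open>auto elim: eventually_mono\<close>)
qed

lemma Limsup_at_right_0_squeeze:
  fixes a b :: "real \<Rightarrow> real"
  assumes nonneg: "\<forall>\<^sub>F r in at_right 0. 0 \<le> a r"
    and lower: "\<forall>\<^sub>F r in at_right 0. a r \<le> b r"
    and upper: "\<And>e. e > 0 \<Longrightarrow> \<forall>\<^sub>F r in at_right 0. b r \<le> (1 + e) * a (r / 2)"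
  shows "Limsup (at_right 0) (\<lambda>r. ereal (b r)) = Limsup (at_right 0) (\<lambda>r. ereal (a r))"
proof (rule antisym)
  let ?F = "at_right (0::real)"
  have "0 \<le> Limsup ?F (\<lambda>r. ereal (a r))"
  proof -
    have "0 \<le> Liminf ?F (\<lambda>r. ereal (a r))"
      by (rule Liminf_bounded) (use nonneg in \<open>auto elim: eventually_mono\<close>)
    also have "\<dots> \<le> Limsup ?F (\<lambda>r. ereal (a r))"
      by (rule Liminf_le_Limsup) simp
    finally show ?thesis .
  qed
  then show "Limsup ?F (\<lambda>r. ereal (b r)) \<le> Limsup ?F (\<lambda>r. ereal (a r))"
  proof (rule ereal_le_epsilon_mult)
    fix e :: real assume "e > 0"
    have "Limsup ?F (\<lambda>r. ereal (b r)) \<le> Limsup ?F (\<lambda>r. ereal (1 + e) * ereal (a (r / 2)))"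
      by (rule Limsup_mono) (use upper[OF \<open>e > 0\<close>] in \<open>auto elim: eventually_mono\<close>)
    also have "\<dots> = ereal (1 + e) * Limsup ?F (\<lambda>r. ereal (a (r / 2)))"
      using \<open>e > 0\<close> by (intro Limsup_ereal_mult_left) auto
    also have "Limsup ?F (\<lambda>r. ereal (a (r / 2))) = Limsup ?F (\<lambda>r. ereal (a r))"
      using Limsup_at_right_0_rescale[of "1/2" "\<lambda>r. ereal (a r)"] by simp
    finally show "Limsup ?F (\<lambda>r. ereal (b r)) \<le> ereal (1 + e) * Limsup ?F (\<lambda>r. ereal (a r))" .
  qed
  show "Limsup ?F (\<lambda>r. ereal (a r)) \<le> Limsup ?F (\<lambda>r. ereal (b r))"
    by (rule Limsup_mono) (use lower in \<open>auto elim: eventually_mono\<close>)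
qed

lemma eventually_ln_half_div_ln_less:
  fixes e :: real
  assumes "e > 0"
  shows "\<forall>\<^sub>F r in at_right 0. ln (r / 2) / ln r < 1 + e"
proof -
  have "((\<lambda>r::real. ln (r / 2) / ln r) \<longlongrightarrow> 1) (at_right 0)"
    by real_asymp
  from order_tendstoD(2)[OF this, of "1 + e"] show ?thesis
    using assms by simp
qed

lemma Liminf_Limsup_ln_ratio_eq_of_pos:
  fixes c p :: "real \<Rightarrow> real"
  assumes pos: "\<And>r. r > 0 \<Longrightarrow> 0 < c r" and le_1: "\<And>r. r > 0 \<Longrightarrow> c r \<le> 1"
    and lower: "\<And>r. r > 0 \<Longrightarrow> c (r / 2) \<le> p r" and upper: "\<And>r. r > 0 \<Longrightarrow> p r \<le> c r"
  shows "Liminf (at_right 0) (\<lambda>r. ereal (ln (p r) / ln r)) = Liminf (at_right 0) (\<lambda>r. ereal (ln (c r) / ln r)) \<and>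
    Limsup (at_right 0) (\<lambda>r. ereal (ln (p r) / ln r)) = Limsup (at_right 0) (\<lambda>r. ereal (ln (c r) / ln r))"
proof -
  define a where "a r = ln (c r) / ln r" for r
  define b where "b r = ln (p r) / ln r" for r
  have small: "\<forall>\<^sub>F r in at_right 0. 0 < r \<and> r < (1::real)"
    unfolding eventually_at_right_field by (intro exI[of _ 1]) auto
  have a_nonneg: "0 \<le> a r" if "0 < r" "r < 1" for r
    unfolding a_def using pos[of r] le_1[of r] that by (intro divide_nonpos_neg) auto
  have a_le_b: "a r \<le> b r" if "0 < r" "r < 1" for r
    unfolding a_def b_def using that pos[of "r / 2"] lower[of r] upper[of r]
    by (intro divide_right_mono_neg) auto
  have b_le_a_half: "b r \<le> (1 + e) * a (r / 2)"
    if "0 < r" "r < 1" "ln (r / 2) / ln r < 1 + e" for r e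
  proof -
    have "b r \<le> ln (c (r / 2)) / ln r"
      unfolding b_def using that pos[of "r / 2"] lower[of r] by (intro divide_right_mono_neg) auto
    also have "\<dots> = a (r / 2) * (ln (r / 2) / ln r)"
      using that unfolding a_def by (simp add: field_simps)
    also have "\<dots> \<le> a (r / 2) * (1 + e)"
      using that a_nonneg[of "r / 2"] by (intro mult_left_mono) auto
    finally show ?thesis
      by (simp add: mult.commute)
  qed
  have "\<forall>\<^sub>F r in at_right 0. b r \<le> (1 + e) * a (r / 2)" if "e > 0" for e
    using eventually_conj[OF small eventually_ln_half_div_ln_less[OF that]]
    by (rule eventually_mono) (use b_le_a_half in auto)
  moreover have "\<forall>\<^sub>F r in at_right 0. 0 \<le> a r" "\<forall>\<^sub>F r in at_right 0. a r \<le> b r"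
    using small by (auto elim!: eventually_mono intro: a_nonneg a_le_b)
  ultimately show ?thesis
    using Liminf_at_right_0_squeeze[of a b] Limsup_at_right_0_squeeze[of a b]
    unfolding a_def b_def by blast
qed

lemma Liminf_Limsup_ln_ratio_eq:
  fixes c p :: "real \<Rightarrow> real"
  assumes mono: "mono_on {0<..} c" and nonneg: "\<And>r. r > 0 \<Longrightarrow> 0 \<le> c r"
    and le_1: "\<And>r. r > 0 \<Longrightarrow> c r \<le> 1"
    and lower: "\<And>r. r > 0 \<Longrightarrow> c (r / 2) \<le> p r" and upper: "\<And>r. r > 0 \<Longrightarrow> p r \<le> c r"
  shows "Liminf (at_right 0) (\<lambda>r. ereal (ln (p r) / ln r)) = Liminf (at_right 0) (\<lambda>r. ereal (ln (c r) / ln r)) \<and>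
    Limsup (at_right 0) (\<lambda>r. ereal (ln (p r) / ln r)) = Limsup (at_right 0) (\<lambda>r. ereal (ln (c r) / ln r))"
proof (cases "\<exists>r0>0. c r0 = 0")
  case True
  then obtain r0 where "r0 > 0" "c r0 = 0"
    by blast
  \<comment> \<open>\<open>c\<close> and \<open>p\<close> vanish on \<open>(0, r0)\<close>, where both ratios are the junk value \<open>ln 0 / ln r = 0\<close>\<close>
  have "p r = c r" if "0 < r" "r < r0" for r
    using mono_onD[OF mono, of r r0] nonneg[of "r / 2"] lower[of r] upper[of r] that \<open>c r0 = 0\<close>
    by (simp add: order_antisym)
  then have "\<forall>\<^sub>F r in at_right 0. ereal (ln (p r) / ln r) = ereal (ln (c r) / ln r)"
    using \<open>r0 > 0\<close> unfolding eventually_at_right_field by auto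
  then show ?thesis
    by (simp add: Liminf_eq Limsup_eq)
next
  case False
  then show ?thesis
    by (intro Liminf_Limsup_ln_ratio_eq_of_pos le_1 lower upper) (use nonneg in \<open>force simp: less_le\<close>)
qed

lemma ereal_mult_Liminf_divide_mult:
  fixes c :: real
  assumes "c > 0" and "F \<noteq> bot"
  shows "ereal c * Liminf F (\<lambda>x. ereal (f x / (c * g x))) = Liminf F (\<lambda>x. ereal (f x / g x))"
  using Liminf_ereal_mult_left[OF assms(2), of c "\<lambda>x. ereal (f x / (c * g x))"] assms(1)
  by simp

lemma ereal_mult_Limsup_divide_mult:
  fixes c :: real
  assumes "c > 0" and "F \<noteq> bot"
  shows "ereal c * Limsup F (\<lambda>x. ereal (f x / (c * g x))) = Limsup F (\<lambda>x. ereal (f x / g x))"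
  using Limsup_ereal_mult_left[OF assms(2), of c "\<lambda>x. ereal (f x / (c * g x))"] assms(1)
  by simp

theorem mainTheorem10:
  fixes M :: "'a::metric_space measure" and k :: nat
  assumes "doubling_metric TYPE('a)"
    and "prob_space M" and "sets M = sets borel"
    and "k \<ge> 2"
  shows "ereal (real k - 1) * lower_Dk M k =
           Liminf (at_right 0) (\<lambda>r. ereal (ln (pair_corr_integral M k r) / ln r)) \<and>
         ereal (real k - 1) * upper_Dk M k =
           Limsup (at_right 0) (\<lambda>r. ereal (ln (pair_corr_integral M k r) / ln r))"
proof -
  note measure_space = assms(2,3) doubling_metric_imp_separable[OF assms(1)]
  have k: "k > 0" "real k - 1 > 0"
    using assms(4) by auto
  have "ereal (real k - 1) * lower_Dk M k =
      Liminf (at_right 0) (\<lambda>r. ereal (ln (corr_integral M k r) / ln r))"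
    unfolding lower_Dk_def using k(2) by (intro ereal_mult_Liminf_divide_mult) simp_all
  moreover have "ereal (real k - 1) * upper_Dk M k =
      Limsup (at_right 0) (\<lambda>r. ereal (ln (corr_integral M k r) / ln r))"
    unfolding upper_Dk_def using k(2) by (intro ereal_mult_Limsup_divide_mult) simp_all
  moreover have "Liminf (at_right 0) (\<lambda>r. ereal (ln (pair_corr_integral M k r) / ln r)) =
      Liminf (at_right 0) (\<lambda>r. ereal (ln (corr_integral M k r) / ln r)) \<and>
    Limsup (at_right 0) (\<lambda>r. ereal (ln (pair_corr_integral M k r) / ln r)) =
      Limsup (at_right 0) (\<lambda>r. ereal (ln (corr_integral M k r) / ln r))"
    by (intro Liminf_Limsup_ln_ratio_eq mono_onI
        corr_integral_mono[OF measure_space k(1)] corr_integral_le_1[OF measure_space k(1)]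
        corr_integral_half_le_pair_corr_integral[OF measure_space k(1)]
        pair_corr_integral_le_corr_integral[OF measure_space k(1)])
      (simp_all add: corr_integral_def)
  ultimately show ?thesis
    by simp
qed

end
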